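(* Fix $\mathtt d\ge1$ and $\mathtt L\in\mathbb N$. There are infinitely many $\mathtt L$-generic sets. More precisely, for $R\ge1$ let $B_R$ be the set of all ordered $\mathtt d$-tuples of integers $\mathcal S=(\mathtt m_1<\dots<\mathtt m_{\mathtt d})$ with $\max_i|\mathtt m_i|\le R$, and let $G_R\subseteq B_R$ be the subset of those which are $\mathtt L$-generic. Then $\lim_{R\to\infty}|G_R|/|B_R|=1$.
   Context: For integers $\mathtt m_1<\dots<\mathtt m_{\mathtt d}$ let $\mathcal S_{0n}=\{(\mathtt m_i,n):1\le i\le\mathtt d\}$ for $n\in\mathbb Z$; for $1\le i<j\le\mathtt d$ let $\mathscr C^\pm_{i,j}=\{(m,n)\in\mathbb Z^2:(m-\mathtt m_i)(m-\mathtt m_j)+n^2=0,\ \pm n>0\}$, $\mathscr C_{i,j}=\mathscr C^+_{i,j}\cup\mathscr C^-_{i,j}$, $\mathscr S=\bigcup_{n\ne0}\mathcal S_{0n}$, $\mathscr C=\bigcup_{i<j}\mathscr C_{i,j}$. The tuple is generic if $\mathscr S\cap\mathscr C=\emptyset$ and $\mathscr C_{i,j}\cap\mathscr C_{i',j'}=\emptyset$ for all $\{i,j\}\ne\{i',j'\}$; it is $\mathtt L$-generic if it is generic and $\sum_i\ell_i\mathtt m_i\ne0$ for all $\ell\in\mathbb Z^{\mathtt d}$ with $0<\sum_i|\ell_i|\le\mathtt L$. *)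

theory Defs
  imports "HOL-Analysis.Analysis"
begin

text \<open>A tuple (m_1 < ... < m_d) is represented as the list ms with m_(i+1) = ms ! i.\<close>

definition S0 :: "int list \<Rightarrow> int \<Rightarrow> (int \<times> int) set" where
  "S0 ms n = {(ms ! i, n) | i. i < length ms}"

definition Cplus :: "int list \<Rightarrow> nat \<Rightarrow> nat \<Rightarrow> (int \<times> int) set" where
  "Cplus ms i j = {(m, n). (m - ms ! i) * (m - ms ! j) + n^2 = 0 \<and> n > 0}"

definition Cminus :: "int list \<Rightarrow> nat \<Rightarrow> nat \<Rightarrow> (int \<times> int) set" where
  "Cminus ms i j = {(m, n). (m - ms ! i) * (m - ms ! j) + n^2 = 0 \<and> - n > 0}"

definition Cij :: "int list \<Rightarrow> nat \<Rightarrow> nat \<Rightarrow> (int \<times> int) set" where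
  "Cij ms i j = Cplus ms i j \<union> Cminus ms i j"

definition Sset :: "int list \<Rightarrow> (int \<times> int) set" where
  "Sset ms = (\<Union>n \<in> {n. n \<noteq> 0}. S0 ms n)"

definition Cset :: "int list \<Rightarrow> (int \<times> int) set" where
  "Cset ms = (\<Union>(i, j) \<in> {(i, j). i < j \<and> j < length ms}. Cij ms i j)"

definition generic :: "int list \<Rightarrow> bool" where
  "generic ms \<longleftrightarrow> Sset ms \<inter> Cset ms = {} \<and>
     (\<forall>i j i' j'. i < j \<and> j < length ms \<and> i' < j' \<and> j' < length ms \<and> {i, j} \<noteq> {i', j'}
        \<longrightarrow> Cij ms i j \<inter> Cij ms i' j' = {})"

definition L_generic :: "nat \<Rightarrow> int list \<Rightarrow> bool" where
  "L_generic L ms \<longleftrightarrow> generic ms \<and>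
     (\<forall>l :: nat \<Rightarrow> int. 0 < (\<Sum>i<length ms. \<bar>l i\<bar>) \<and> (\<Sum>i<length ms. \<bar>l i\<bar>) \<le> int L
        \<longrightarrow> (\<Sum>i<length ms. l i * ms ! i) \<noteq> 0)"

definition Bset :: "nat \<Rightarrow> real \<Rightarrow> int list set" where
  "Bset d R = {ms. length ms = d \<and> sorted_wrt (<) ms \<and> (\<forall>x \<in> set ms. real_of_int \<bar>x\<bar> \<le> R)}"

definition Gset :: "nat \<Rightarrow> nat \<Rightarrow> real \<Rightarrow> int list set" where
  "Gset d L R = {ms \<in> Bset d R. L_generic L ms}"

end

theory Submission
  imports Defs
begin

(*
  Put N = floor R. Then B_R consists of the strictly increasing lists of length d with entries
  in [-N, N], so |B_R| = (2N+1 choose d) >= ((2N+1)/d)^d. A tuple that is not L-generic satisfies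
  a nontrivial linear relation with coefficients in [-L, L], or some m_k is the abscissa of a
  lattice point (m_k, n), n ~= 0, on a circle C_ij, or two distinct circles C_ij, C_i'j' share such
  a point. In each case the tuple is determined by its entries off 1, 3 or 4 positions together
  with a parameter ranging over a set of size O(N^(k - 1/2)), where k is the number of those
  positions: a point of C_ij gives (m - m_i)(m - m_j) = -n^2, and there are only O(N^(3/2)) pairs
  (u, v) in [-2N, 2N]^2 with uv = -n^2, since for fixed u the admissible n are sqrt|u| apart.
  Hence at most O(N^(d - 1/2)) tuples are not L-generic, a proportion O(R^(-1/2)) of B_R; as
  |B_R| grows without bound, the L-generic tuples are also infinite in number.
*)

section \<open>Pairs of integers with square product\<close>

lemma dvd_square_diff:
  fixes x a b :: int
  assumes "x dvd a^2" "x dvd b^2"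
  shows "x dvd (b - a)^2"
proof -
  have "x^2 dvd (a*b)^2"
    unfolding power_mult_distrib using mult_dvd_mono[OF assms] by (simp only: power2_eq_square)
  then have "x dvd a*b" by (simp add: pow_divides_pow_iff)
  then have "x dvd b^2 + a^2 - 2 * (a*b)" using assms by (metis dvd_add dvd_diff dvd_mult)
  then show ?thesis by (simp add: power2_diff algebra_simps)
qed

lemma card_separated_le:
  fixes T :: "int set" and s :: real
  assumes "T \<subseteq> {a..b}" "a \<le> b" "s \<ge> 1"
    and sep: "\<And>x y. x \<in> T \<Longrightarrow> y \<in> T \<Longrightarrow> x < y \<Longrightarrow> s \<le> y - x"
  shows "real (card T) \<le> (b - a) / s + 1"
proof -
  define f where "f t = \<lfloor>(t - a) / s\<rfloor>" for t :: int
  have "strict_mono_on T f"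
  proof (rule strict_mono_onI)
    fix x y assume "x \<in> T" "y \<in> T" "x < y"
    then have "1 \<le> (y - a) / s - (x - a) / s"
      using sep \<open>s \<ge> 1\<close> by (simp add: diff_divide_distrib[symmetric] le_divide_eq)
    then show "f x < f y" unfolding f_def by linarith
  qed
  then have "card T = card (f ` T)" by (simp add: card_image strict_mono_on_imp_inj_on)
  also have "\<dots> \<le> card {0..\<lfloor>(b - a) / s\<rfloor>}"
  proof (intro card_mono)
    show "f ` T \<subseteq> {0..\<lfloor>(b - a) / s\<rfloor>}"
    proof
      fix y assume "y \<in> f ` T"
      then obtain t where "y = f t" "a \<le> t" "t \<le> b" using assms(1) by auto
      then show "y \<in> {0..\<lfloor>(b - a) / s\<rfloor>}"
        using assms(3) by (auto simp: f_def intro!: floor_mono divide_right_mono)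
    qed
  qed simp
  finally have "real (card T) \<le> real (card {0..\<lfloor>(b - a) / s\<rfloor>})" by simp
  also have "\<dots> = \<lfloor>(b - a) / s\<rfloor> + 1" using assms(2,3) by simp
  finally show ?thesis
    using of_int_floor_le[of "real_of_int (b - a) / s"] unfolding of_int_add of_int_diff by linarith
qed

lemma card_square_multiples_le:
  fixes x M :: int
  assumes "x \<ge> 1" "M \<ge> 0"
  shows "real (card {n \<in> {1..M}. x dvd n^2}) \<le> M / sqrt x + 1"
proof -
  have "real (card {n \<in> {1..M}. x dvd n^2}) \<le> (real_of_int M - real_of_int 0) / sqrt x + 1"
  proof (rule card_separated_le)
    fix a b assume "a \<in> {n \<in> {1..M}. x dvd n^2}" "b \<in> {n \<in> {1..M}. x dvd n^2}" "a < b"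
    then have "x \<le> (b - a)^2" by (intro zdvd_imp_le dvd_square_diff) auto
    then have "real_of_int x \<le> (real_of_int b - real_of_int a)^2" by (metis of_int_diff of_int_le_iff of_int_power)
    then show "sqrt x \<le> real_of_int b - real_of_int a" using \<open>a < b\<close> by (simp add: real_le_lsqrt)
  qed (use assms in auto)
  then show ?thesis by simp
qed

lemma sum_inverse_sqrt_le: "(\<Sum>x=1..n. 1 / sqrt (real x)) \<le> 2 * sqrt (real n)"
proof (induction n)
  case (Suc n)
  define s t where "s = sqrt (real (Suc n))" and "t = sqrt (real n)"
  have s: "s * s = t * t + 1" "0 \<le> t" "t \<le> s" "0 < s" by (simp_all add: s_def t_def)
  then have "2 * t * (s - t) \<le> (s + t) * (s - t)" by (intro mult_right_mono) auto
  also have "\<dots> = 1" using s(1) by (simp add: algebra_simps)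
  finally have "1 \<le> (2 * s - 2 * t) * s" using s(1) by (simp add: algebra_simps)
  then have "1 / s \<le> 2 * s - 2 * t" using s(4) by (simp add: divide_le_eq)
  then show ?case using Suc by (simp add: s_def t_def)
qed simp

definition square_product_pairs :: "nat \<Rightarrow> (int \<times> int) set" where
  "square_product_pairs M = {(x, y). x \<in> {1..int M} \<and> y \<in> {1..int M} \<and> (\<exists>n. x * y = n^2)}"

(* For a lattice point (m, n), n ~= 0, of C_ij, the pair (m - m_i, m - m_j) lies in this set. *)
definition neg_square_pairs :: "nat \<Rightarrow> (int \<times> int) set" where
  "neg_square_pairs M = {(u, v). \<bar>u\<bar> \<le> int M \<and> \<bar>v\<bar> \<le> int M \<and> (\<exists>n. n \<noteq> 0 \<and> u * v = -(n^2))}"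

lemma finite_square_product_pairs: "finite (square_product_pairs M)"
  by (rule finite_subset[of _ "{1..int M} \<times> {1..int M}"]) (auto simp: square_product_pairs_def)

lemma finite_neg_square_pairs: "finite (neg_square_pairs M)"
  by (rule finite_subset[of _ "{-int M..int M} \<times> {-int M..int M}"]) (auto simp: neg_square_pairs_def)

lemma card_square_product_pairs:
  "real (card (square_product_pairs M)) \<le> real M + 2 * real M * sqrt (real M)"
proof -
  define Q where "Q x = {n \<in> {1..int M}. int x dvd n^2}" for x
  define \<Sigma> where "\<Sigma> = (SIGMA x:{1..M}. Q x)"
  have finQ: "finite (Q x)" for x unfolding Q_def by (rule finite_subset[of _ "{1..int M}"]) auto
  then have fin: "finite \<Sigma>" by (simp add: \<Sigma>_def)
  (* y = n^2 / x, and for fixed x the n with x dvd n^2 are at least sqrt x apart. *)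
  have "square_product_pairs M \<subseteq> (\<lambda>(x, n). (int x, n^2 div int x)) ` \<Sigma>"
  proof
    fix p assume "p \<in> square_product_pairs M"
    then obtain x y n where p: "p = (x, y)" "x \<in> {1..int M}" "y \<in> {1..int M}" "x * y = n^2"
      unfolding square_product_pairs_def by auto
    have sq: "\<bar>n\<bar>^2 = x * y" using p(4) by simp
    have "x * y \<le> int M * int M" using p(2,3) by (intro mult_mono) auto
    then have "\<bar>n\<bar>^2 \<le> (int M)^2" unfolding sq by (simp add: power2_eq_square)
    then have "\<bar>n\<bar> \<le> int M" by (rule power2_le_imp_le) simp
    moreover have "0 < x * y" using p(2,3) by simp
    then have "1 \<le> \<bar>n\<bar>" using p(4) by (cases "n = 0") auto
    moreover have "int (nat x) dvd \<bar>n\<bar>^2" using sq p(2) by simp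
    moreover have "nat x \<in> {1..M}" using p(2) by auto
    ultimately have "(nat x, \<bar>n\<bar>) \<in> \<Sigma>" by (simp add: \<Sigma>_def Q_def)
    moreover have "p = (int (nat x), \<bar>n\<bar>^2 div int (nat x))" using p(1,2) sq by simp
    ultimately show "p \<in> (\<lambda>(x, n). (int x, n^2 div int x)) ` \<Sigma>" by (auto intro: rev_image_eqI)
  qed
  then have "card (square_product_pairs M) \<le> card \<Sigma>"
    using fin by (meson card_image_le card_mono finite_imageI order_trans)
  also have "\<dots> = (\<Sum>x=1..M. card (Q x))" unfolding \<Sigma>_def using finQ by (intro card_SigmaI) auto
  finally have "real (card (square_product_pairs M)) \<le> (\<Sum>x=1..M. real (card (Q x)))"
    by (metis of_nat_mono of_nat_sum)
  also have "\<dots> \<le> (\<Sum>x=1..M. M * (1 / sqrt x) + 1)"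
  proof (rule sum_mono)
    fix x assume "x \<in> {1..M}"
    then show "real (card (Q x)) \<le> M * (1 / sqrt x) + 1"
      using card_square_multiples_le[of "int x" "int M"] by (simp add: Q_def)
  qed
  also have "\<dots> = M * (\<Sum>x=1..M. 1 / sqrt x) + M" by (simp add: sum.distrib sum_distrib_left)
  also have "\<dots> \<le> M * (2 * sqrt M) + M" using sum_inverse_sqrt_le[of M] by (simp add: mult_left_mono)
  finally show ?thesis by simp
qed

lemma card_neg_square_pairs:
  "real (card (neg_square_pairs M)) \<le> 6 * real (M + 1) * sqrt (real (M + 1))"
proof -
  let ?W = "square_product_pairs M"
  have "neg_square_pairs M \<subseteq> (\<lambda>(x, y). (x, -y)) ` ?W \<union> (\<lambda>(x, y). (-x, y)) ` ?W"
  proof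
    fix p assume "p \<in> neg_square_pairs M"
    then obtain u v n where p: "p = (u, v)" "\<bar>u\<bar> \<le> int M" "\<bar>v\<bar> \<le> int M" "n \<noteq> 0" "u * v = -(n^2)"
      unfolding neg_square_pairs_def by auto
    then have "u * v < 0" by simp
    then have "0 < u \<and> v < 0 \<or> u < 0 \<and> 0 < v" by (simp add: mult_less_0_iff)
    then have "(u, -v) \<in> ?W \<or> (-u, v) \<in> ?W"
      using p by (auto simp: square_product_pairs_def)
    then show "p \<in> (\<lambda>(x, y). (x, -y)) ` ?W \<union> (\<lambda>(x, y). (-x, y)) ` ?W"
      using p(1) by (auto intro: rev_image_eqI)
  qed
  then have "card (neg_square_pairs M) \<le> card ((\<lambda>(x, y). (x, -y)) ` ?W) + card ((\<lambda>(x, y). (-x, y)) ` ?W)"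
    using finite_square_product_pairs by (meson card_Un_le card_mono finite_UnI finite_imageI order_trans)
  also have "\<dots> \<le> 2 * card ?W" unfolding mult_2 by (intro add_mono card_image_le finite_square_product_pairs)
  finally have "real (card (neg_square_pairs M)) \<le> 2 * (real M + 2 * real M * sqrt (real M))"
    using card_square_product_pairs[of M] by simp
  moreover have "real M \<le> (real M + 1) * sqrt (real M + 1)"
    "real M * sqrt (real M) \<le> (real M + 1) * sqrt (real M + 1)"
    using mult_mono[of "real M" "real M + 1" 1 "sqrt (real M + 1)"] by (simp_all add: mult_mono)
  ultimately show ?thesis by (simp add: algebra_simps)
qed

section \<open>Lists determined by a few of their entries\<close>

definition bounded_lists :: "nat \<Rightarrow> nat \<Rightarrow> int list set" where
  "bounded_lists N d = {ms. length ms = d \<and> set ms \<subseteq> {-int N..int N}}"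

lemma finite_bounded_lists: "finite (bounded_lists N d)"
  unfolding bounded_lists_def using finite_lists_length_eq[of "{-int N..int N}" d] by (simp add: conj_commute)

lemma card_symmetric_interval: "card {-int N..int N} = 2 * N + 1"
  by (simp add: nat_add_distrib nat_mult_distrib)

lemma card_lists_determined_le:
  fixes X :: "'a list set" and D :: "'p set"
  assumes "finite D" "finite A" "J \<subseteq> {..<d}"
    and determined: "\<And>ms. ms \<in> X \<Longrightarrow> length ms = d \<and> set ms \<subseteq> A \<and>
           (\<exists>p\<in>D. \<forall>i\<in>J. ms ! i = g p (restrict (nth ms) ({..<d} - J)) i)"
  shows "card X \<le> card D * card A ^ (d - card J)"
proof -
  define h where "h = (\<lambda>(p, r). map (\<lambda>i. if i \<in> J then g p r i else r i) [0..<d])"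
  define E where "E = ({..<d} - J) \<rightarrow>\<^sub>E A"
  have "finite E" unfolding E_def using assms(2) by (intro finite_PiE) auto
  have "X \<subseteq> h ` (D \<times> E)"
  proof
    fix ms assume "ms \<in> X"
    with determined obtain p where ms: "length ms = d" "set ms \<subseteq> A" "p \<in> D"
      and p: "\<forall>i\<in>J. ms ! i = g p (restrict (nth ms) ({..<d} - J)) i" by blast
    have "restrict (nth ms) ({..<d} - J) \<in> E" unfolding E_def using ms by auto
    moreover have "h (p, restrict (nth ms) ({..<d} - J)) = ms"
      unfolding h_def using ms p by (intro nth_equalityI) auto
    ultimately show "ms \<in> h ` (D \<times> E)" using ms(3) by force
  qed
  then have "card X \<le> card (D \<times> E)"
    using assms(1) \<open>finite E\<close> by (meson card_image_le card_mono finite_SigmaI finite_imageI order_trans)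
  also have "\<dots> = card D * card A ^ (d - card J)"
    using assms(3) by (simp add: E_def card_cartesian_product card_PiE card_Diff_subset finite_subset)
  finally show ?thesis .
qed

lemma scaled_power_le:
  fixes P c x y :: real
  assumes "0 \<le> P" "1 \<le> m" "m \<le> d" "x \<le> y * P ^ (d - m)" "y \<le> c * P ^ (m - 1) * sqrt P"
  shows "x \<le> c * P ^ (d - 1) * sqrt P"
proof -
  have "x \<le> c * P ^ (m - 1) * sqrt P * P ^ (d - m)"
    using assms(1,4,5) by (meson mult_right_mono order_trans zero_le_power)
  also have "\<dots> = c * P ^ (m - 1 + (d - m)) * sqrt P"
    by (simp add: power_add)
  also have "m - 1 + (d - m) = d - 1" using assms(2,3) by simp
  finally show ?thesis .
qed

section \<open>Tuples that are not generic\<close>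

lemma Cij_iff: "(m, n) \<in> Cij ms i j \<longleftrightarrow> n \<noteq> 0 \<and> (m - ms ! i) * (m - ms ! j) = -(n^2)"
  unfolding Cij_def Cplus_def Cminus_def by auto

lemma Cij_commute: "Cij ms i j = Cij ms j i"
  unfolding Cij_def Cplus_def Cminus_def by (auto simp: mult.commute)

definition relation_lists :: "nat \<Rightarrow> nat \<Rightarrow> (nat \<Rightarrow> int) \<Rightarrow> int list set" where
  "relation_lists N d l = {ms \<in> bounded_lists N d. (\<Sum>i<d. l i * ms ! i) = 0}"

definition circle_lists :: "nat \<Rightarrow> nat \<Rightarrow> nat \<Rightarrow> nat \<Rightarrow> nat \<Rightarrow> int list set" where
  "circle_lists N d i j k = {ms \<in> bounded_lists N d. \<exists>n. (ms ! k, n) \<in> Cij ms i j}"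

definition circle_pair_lists :: "nat \<Rightarrow> nat \<Rightarrow> nat \<Rightarrow> nat \<Rightarrow> nat \<Rightarrow> nat \<Rightarrow> int list set" where
  "circle_pair_lists N d i j i' j' = {ms \<in> bounded_lists N d. Cij ms i j \<inter> Cij ms i' j' \<noteq> {}}"

lemma card_relation_lists:
  assumes "k < d" "l k \<noteq> 0"
  shows "real (card (relation_lists N d l)) \<le> real (2 * N + 1) ^ (d - 1) * sqrt (real (2 * N + 1))"
proof -
  define P where "P = real (2 * N + 1)"
  let ?g = "\<lambda>_ r _. - (\<Sum>j\<in>{..<d} - {k}. l j * r j) div l k"
  have "card (relation_lists N d l) \<le> card {()} * card {-int N..int N} ^ (d - card {k})"
  proof (rule card_lists_determined_le[where g = ?g])
    fix ms assume "ms \<in> relation_lists N d l"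
    then have ms: "length ms = d" "set ms \<subseteq> {-int N..int N}" "(\<Sum>i<d. l i * ms ! i) = 0"
      unfolding relation_lists_def bounded_lists_def by auto
    have "l k * ms ! k + (\<Sum>j\<in>{..<d} - {k}. l j * restrict (nth ms) ({..<d} - {k}) j) = 0"
      using ms(3) assms(1) by (simp add: sum.remove)
    then have "ms ! k = - (\<Sum>j\<in>{..<d} - {k}. l j * restrict (nth ms) ({..<d} - {k}) j) div l k"
      using assms(2) by (metis add.commute add_eq_0_iff nonzero_mult_div_cancel_left)
    then show "length ms = d \<and> set ms \<subseteq> {-int N..int N} \<and> (\<exists>p\<in>{()}. \<forall>i\<in>{k}.
        ms ! i = ?g p (restrict (nth ms) ({..<d} - {k})) i)"
      using ms by auto
  qed (use assms in auto)
  then have "card (relation_lists N d l) \<le> (2 * N + 1) ^ (d - 1)"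
    by (simp only: card_symmetric_interval) simp
  then have "real (card (relation_lists N d l)) \<le> 1 * P ^ (d - 1)"
    unfolding P_def by (simp only: mult_1 of_nat_power[symmetric] of_nat_le_iff)
  moreover have "1 \<le> 1 * P ^ (1 - 1) * sqrt P"
    by (simp add: P_def)
  ultimately have "real (card (relation_lists N d l)) \<le> 1 * P ^ (d - 1) * sqrt P"
    by (rule scaled_power_le[rotated 3]) (use assms(1) in \<open>auto simp: P_def\<close>)
  then show ?thesis by (simp add: P_def)
qed

lemma card_circle_lists_le:
  assumes "i < d" "j < d" "k < d" "distinct [i, j, k]"
  shows "card (circle_lists N d i j k) \<le> (2 * N + 1) * card (neg_square_pairs (2 * N)) * (2 * N + 1) ^ (d - 3)"
proof -
  let ?A = "{-int N..int N}" and ?W = "neg_square_pairs (2 * N)"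
  let ?g = "\<lambda>(c, u, v) r t. if t = k then c else if t = i then c - u else c - v"
  have "card (circle_lists N d i j k) \<le> card (?A \<times> ?W) * card ?A ^ (d - card {i, j, k})"
  proof (rule card_lists_determined_le[where g = ?g])
    fix ms assume "ms \<in> circle_lists N d i j k"
    then obtain n where ms: "length ms = d" "set ms \<subseteq> ?A" and "(ms ! k, n) \<in> Cij ms i j"
      unfolding circle_lists_def bounded_lists_def by auto
    then have n: "n \<noteq> 0" "(ms ! k - ms ! i) * (ms ! k - ms ! j) = -(n^2)" by (simp_all add: Cij_iff)
    have bound: "ms ! t \<in> ?A" if "t < d" for t using ms that by (metis nth_mem subsetD)
    have "(ms ! k - ms ! i, ms ! k - ms ! j) \<in> ?W"
      unfolding neg_square_pairs_def using n bound[OF assms(1)] bound[OF assms(2)] bound[OF assms(3)] by auto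
    then show "length ms = d \<and> set ms \<subseteq> ?A \<and> (\<exists>p\<in>?A \<times> ?W. \<forall>t\<in>{i, j, k}.
        ms ! t = ?g p (restrict (nth ms) ({..<d} - {i, j, k})) t)"
      using ms bound assms by (intro conjI bexI[of _ "(ms ! k, ms ! k - ms ! i, ms ! k - ms ! j)"]) auto
  qed (use assms finite_neg_square_pairs in auto)
  moreover have "card {i, j, k} = 3" using assms(4) by simp
  ultimately show ?thesis by (simp only: card_cartesian_product card_symmetric_interval)
qed

lemma card_circle_lists:
  assumes "i < d" "j < d" "k < d" "distinct [i, j, k]"
  shows "real (card (circle_lists N d i j k)) \<le> 6 * real (2 * N + 1) ^ (d - 1) * sqrt (real (2 * N + 1))"
proof -
  define P where "P = real (2 * N + 1)"
  let ?W = "neg_square_pairs (2 * N)"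
  have "real (card (circle_lists N d i j k)) \<le> P * real (card ?W) * P ^ (d - 3)"
    using card_circle_lists_le[OF assms] unfolding P_def
    by (simp only: of_nat_mult[symmetric] of_nat_power[symmetric] of_nat_le_iff)
  moreover have "P * real (card ?W) \<le> 6 * P ^ (3 - 1) * sqrt P"
  proof -
    have "P * real (card ?W) \<le> P * (6 * P * sqrt P)"
      using card_neg_square_pairs[of "2 * N"] unfolding P_def by (intro mult_left_mono) simp_all
    also have "\<dots> = 6 * P ^ (3 - 1) * sqrt P"
      by (simp add: power2_eq_square)
    finally show ?thesis .
  qed
  ultimately have "real (card (circle_lists N d i j k)) \<le> 6 * P ^ (d - 1) * sqrt P"
    by (rule scaled_power_le[rotated 3]) (use assms in \<open>auto simp: P_def\<close>)
  then show ?thesis by (simp add: P_def)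
qed

lemma card_circle_pair_lists_le:
  assumes "i < d" "j < d" "i' < d" "j' < d" "distinct [i, j, i', j']"
  shows "card (circle_pair_lists N d i j i' j')
    \<le> (2 * N + 1) * (card (neg_square_pairs (2 * N)) * (2 * N + 1)) * (2 * N + 1) ^ (d - 4)"
proof -
  let ?A = "{-int N..int N}" and ?W = "neg_square_pairs (2 * N)"
  (* Both circles give -n^2 at the common point m = a + u, which recovers m_j' from m_i' = c. *)
  let ?g = "\<lambda>(a, (u, v), c) r t. if t = i then a else if t = j then a + u - v
        else if t = i' then c else (a + u) - (u * v) div (a + u - c)"
  have "card (circle_pair_lists N d i j i' j') \<le> card (?A \<times> ?W \<times> ?A) * card ?A ^ (d - card {i, j, i', j'})"
  proof (rule card_lists_determined_le[where g = ?g])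
    fix ms assume "ms \<in> circle_pair_lists N d i j i' j'"
    then obtain m n where ms: "length ms = d" "set ms \<subseteq> ?A"
      and "(m, n) \<in> Cij ms i j" "(m, n) \<in> Cij ms i' j'"
      unfolding circle_pair_lists_def bounded_lists_def by auto
    then have n: "n \<noteq> 0" "(m - ms ! i) * (m - ms ! j) = -(n^2)" "(m - ms ! i') * (m - ms ! j') = -(n^2)"
      by (simp_all add: Cij_iff)
    have bound: "ms ! t \<in> ?A" if "t < d" for t using ms that by (metis nth_mem subsetD)
    have "(m - ms ! i) * (m - ms ! j) < 0" using n by simp
    then have "ms ! i < m \<and> m < ms ! j \<or> ms ! j < m \<and> m < ms ! i"
      by (auto simp: mult_less_0_iff)
    then have "(m - ms ! i, m - ms ! j) \<in> ?W"
      unfolding neg_square_pairs_def using n bound[OF assms(1)] bound[OF assms(2)] by auto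
    moreover have "ms ! j' = m - ((m - ms ! i) * (m - ms ! j)) div (m - ms ! i')"
    proof -
      have "m - ms ! i' \<noteq> 0" using n by auto
      moreover have "(m - ms ! i) * (m - ms ! j) = (m - ms ! i') * (m - ms ! j')" using n by simp
      ultimately show ?thesis by simp
    qed
    ultimately show "length ms = d \<and> set ms \<subseteq> ?A \<and> (\<exists>p\<in>?A \<times> ?W \<times> ?A. \<forall>t\<in>{i, j, i', j'}.
        ms ! t = ?g p (restrict (nth ms) ({..<d} - {i, j, i', j'})) t)"
      using ms bound assms by (intro conjI bexI[of _ "(ms ! i, (m - ms ! i, m - ms ! j), ms ! i')"]) auto
  qed (use assms finite_neg_square_pairs in auto)
  moreover have "card {i, j, i', j'} = 4" using assms(5) by simp
  ultimately show ?thesis by (simp only: card_cartesian_product card_symmetric_interval)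
qed

lemma card_circle_pair_lists:
  assumes "i < d" "j < d" "i' < d" "j' < d" "distinct [i, j, i', j']"
  shows "real (card (circle_pair_lists N d i j i' j'))
    \<le> 6 * real (2 * N + 1) ^ (d - 1) * sqrt (real (2 * N + 1))"
proof -
  define P where "P = real (2 * N + 1)"
  let ?W = "neg_square_pairs (2 * N)"
  have "real (card (circle_pair_lists N d i j i' j')) \<le> P * (real (card ?W) * P) * P ^ (d - 4)"
    using card_circle_pair_lists_le[OF assms] unfolding P_def
    by (simp only: of_nat_mult[symmetric] of_nat_power[symmetric] of_nat_le_iff)
  moreover have "P * (real (card ?W) * P) \<le> 6 * P ^ (4 - 1) * sqrt P"
  proof -
    have "P * (real (card ?W) * P) \<le> P * (6 * P * sqrt P * P)"
      using card_neg_square_pairs[of "2 * N"] unfolding P_def by (intro mult_left_mono mult_right_mono) simp_all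
    also have "\<dots> = 6 * P ^ (4 - 1) * sqrt P"
      by (simp add: power3_eq_cube)
    finally show ?thesis .
  qed
  ultimately have "real (card (circle_pair_lists N d i j i' j')) \<le> 6 * P ^ (d - 1) * sqrt P"
    by (rule scaled_power_le[rotated 3]) (use assms in \<open>auto simp: P_def\<close>)
  then show ?thesis by (simp add: P_def)
qed

definition coeff_vectors :: "nat \<Rightarrow> nat \<Rightarrow> (nat \<Rightarrow> int) set" where
  "coeff_vectors d L = {l \<in> {..<d} \<rightarrow>\<^sub>E {-int L..int L}. \<exists>k<d. l k \<noteq> 0}"

definition distinct_triples :: "nat \<Rightarrow> (nat \<times> nat \<times> nat) set" where
  "distinct_triples d = {(i, j, k). i < d \<and> j < d \<and> k < d \<and> distinct [i, j, k]}"

definition distinct_quadruples :: "nat \<Rightarrow> (nat \<times> nat \<times> nat \<times> nat) set" where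
  "distinct_quadruples d = {(i, j, i', j'). i < d \<and> j < d \<and> i' < d \<and> j' < d \<and> distinct [i, j, i', j']}"

definition exceptional_lists :: "nat \<Rightarrow> nat \<Rightarrow> nat \<Rightarrow> int list set" where
  "exceptional_lists N d L =
    (\<Union>l\<in>coeff_vectors d L. relation_lists N d l) \<union>
    (\<Union>(i, j, k)\<in>distinct_triples d. circle_lists N d i j k) \<union>
    (\<Union>(i, j, i', j')\<in>distinct_quadruples d. circle_pair_lists N d i j i' j')"

lemma card_coeff_vectors: "finite (coeff_vectors d L)" "card (coeff_vectors d L) \<le> (2 * L + 1) ^ d"
proof -
  have sub: "coeff_vectors d L \<subseteq> {..<d} \<rightarrow>\<^sub>E {-int L..int L}" unfolding coeff_vectors_def by auto
  moreover have fin: "finite ({..<d} \<rightarrow>\<^sub>E {-int L..int L})" by (intro finite_PiE) auto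
  ultimately show "finite (coeff_vectors d L)" by (rule finite_subset)
  have "card (coeff_vectors d L) \<le> card ({..<d} \<rightarrow>\<^sub>E {-int L..int L})" using card_mono[OF fin sub] .
  also have "\<dots> = (2 * L + 1) ^ d" by (simp only: card_PiE finite_lessThan prod_constant card_symmetric_interval card_lessThan)
  finally show "card (coeff_vectors d L) \<le> (2 * L + 1) ^ d" .
qed

lemma card_distinct_triples: "finite (distinct_triples d)" "card (distinct_triples d) \<le> d ^ 3"
proof -
  have sub: "distinct_triples d \<subseteq> {..<d} \<times> {..<d} \<times> {..<d}" unfolding distinct_triples_def by auto
  then show "finite (distinct_triples d)" by (rule finite_subset) simp
  have "card (distinct_triples d) \<le> card ({..<d} \<times> {..<d} \<times> {..<d})" using card_mono[OF _ sub] by simp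
  also have "\<dots> = d ^ 3" by (simp add: card_cartesian_product power3_eq_cube)
  finally show "card (distinct_triples d) \<le> d ^ 3" .
qed

lemma card_distinct_quadruples: "finite (distinct_quadruples d)" "card (distinct_quadruples d) \<le> d ^ 4"
proof -
  have sub: "distinct_quadruples d \<subseteq> {..<d} \<times> {..<d} \<times> {..<d} \<times> {..<d}"
    unfolding distinct_quadruples_def by auto
  then show "finite (distinct_quadruples d)" by (rule finite_subset) simp
  have "card (distinct_quadruples d) \<le> card ({..<d} \<times> {..<d} \<times> {..<d} \<times> {..<d})" using card_mono[OF _ sub] by simp
  also have "\<dots> = d ^ 4" by (simp add: card_cartesian_product power4_eq_xxxx)
  finally show "card (distinct_quadruples d) \<le> d ^ 4" .
qed

lemma card_UN_le_uniform:
  assumes "finite I" "card I \<le> n" "0 \<le> b" "\<And>i. i \<in> I \<Longrightarrow> real (card (A i)) \<le> b"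
  shows "real (card (\<Union>i\<in>I. A i)) \<le> real n * b"
proof -
  have "real (card (\<Union>i\<in>I. A i)) \<le> (\<Sum>i\<in>I. real (card (A i)))"
    using card_UN_le[OF assms(1), of A] by (metis of_nat_mono of_nat_sum)
  also have "\<dots> \<le> real (card I) * b" using sum_bounded_above[of I "\<lambda>i. real (card (A i))" b] assms(4) by simp
  also have "\<dots> \<le> real n * b" using assms(2,3) by (simp add: mult_right_mono)
  finally show ?thesis .
qed

lemma card_exceptional_lists:
  "real (card (exceptional_lists N d L))
    \<le> real ((2 * L + 1) ^ d + 6 * d ^ 3 + 6 * d ^ 4) * real (2 * N + 1) ^ (d - 1) * sqrt (real (2 * N + 1))"
proof -
  define X where "X = real (2 * N + 1) ^ (d - 1) * sqrt (real (2 * N + 1))"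
  let ?R = "\<Union>l\<in>coeff_vectors d L. relation_lists N d l"
  let ?C = "\<Union>(i, j, k)\<in>distinct_triples d. circle_lists N d i j k"
  let ?CC = "\<Union>(i, j, i', j')\<in>distinct_quadruples d. circle_pair_lists N d i j i' j'"
  have "0 \<le> X" unfolding X_def by simp
  have "real (card ?R) \<le> real ((2 * L + 1) ^ d) * X"
    using card_relation_lists \<open>0 \<le> X\<close> card_coeff_vectors
    by (intro card_UN_le_uniform) (auto simp: X_def coeff_vectors_def)
  moreover have "real (card ?C) \<le> real (d ^ 3) * (6 * X)"
    using card_circle_lists \<open>0 \<le> X\<close> card_distinct_triples
    by (intro card_UN_le_uniform) (auto simp: X_def distinct_triples_def mult.assoc)
  moreover have "real (card ?CC) \<le> real (d ^ 4) * (6 * X)"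
    using card_circle_pair_lists \<open>0 \<le> X\<close> card_distinct_quadruples
    by (intro card_UN_le_uniform) (auto simp: X_def distinct_quadruples_def mult.assoc)
  moreover have "card (exceptional_lists N d L) \<le> card ?R + card ?C + card ?CC"
    unfolding exceptional_lists_def by (rule order_trans[OF card_Un_le add_right_mono[OF card_Un_le]])
  ultimately have "real (card (exceptional_lists N d L)) \<le> real ((2 * L + 1) ^ d) * X + real (d ^ 3) * (6 * X)
      + real (d ^ 4) * (6 * X)"
    by linarith
  then show ?thesis by (simp add: X_def algebra_simps)
qed

lemma Cij_shared_endpoint:
  assumes "distinct ms" "j < length ms" "k < length ms" "Cij ms i j \<inter> Cij ms i k \<noteq> {}"
  shows "j = k"
proof -
  obtain m n where "(m, n) \<in> Cij ms i j" "(m, n) \<in> Cij ms i k" using assms(4) by auto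
  then have "(m - ms ! i) * (m - ms ! j) = (m - ms ! i) * (m - ms ! k)" "m - ms ! i \<noteq> 0"
    by (auto simp: Cij_iff)
  then have "ms ! j = ms ! k" by simp
  then show ?thesis using assms(1-3) nth_eq_iff_index_eq by blast
qed

lemma relation_imp_exceptional:
  assumes "ms \<in> bounded_lists N d" "0 < (\<Sum>i<d. \<bar>l i\<bar>)" "(\<Sum>i<d. \<bar>l i\<bar>) \<le> int L"
    "(\<Sum>i<d. l i * ms ! i) = 0"
  shows "ms \<in> exceptional_lists N d L"
proof -
  define l' where "l' = restrict l {..<d}"
  obtain k where k: "k < d" "l k \<noteq> 0"
    using assms(2) by (metis abs_zero lessThan_iff less_irrefl sum.neutral)
  have "\<bar>l i\<bar> \<le> int L" if "i < d" for i
    using member_le_sum[of i "{..<d}" "\<lambda>i. \<bar>l i\<bar>"] that assms(3) by simp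
  then have "l' \<in> coeff_vectors d L" unfolding coeff_vectors_def l'_def using k by (force simp: abs_le_iff)
  moreover have "ms \<in> relation_lists N d l'" unfolding relation_lists_def l'_def using assms(1,4) by simp
  ultimately show ?thesis by (auto simp: exceptional_lists_def)
qed

lemma S_meets_C_imp_exceptional:
  assumes "ms \<in> bounded_lists N d" "Sset ms \<inter> Cset ms \<noteq> {}"
  shows "ms \<in> exceptional_lists N d L"
proof -
  have len: "length ms = d" using assms(1) by (simp add: bounded_lists_def)
  obtain m n where "(m, n) \<in> Sset ms" "(m, n) \<in> Cset ms" using assms(2) by auto
  then obtain i j k where "k < d" "m = ms ! k" "i < j" "j < d" "(m, n) \<in> Cij ms i j"
    unfolding Sset_def S0_def Cset_def len by auto
  moreover from this have "k \<noteq> i" "k \<noteq> j" by (auto simp: Cij_iff)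
  ultimately have "(i, j, k) \<in> distinct_triples d" "ms \<in> circle_lists N d i j k"
    using assms(1) by (auto simp: distinct_triples_def circle_lists_def)
  then show ?thesis by (auto simp: exceptional_lists_def)
qed

lemma circles_meet_imp_exceptional:
  assumes "ms \<in> bounded_lists N d" "distinct ms" "i < j" "j < d" "i' < j'" "j' < d"
    "{i, j} \<noteq> {i', j'}" "Cij ms i j \<inter> Cij ms i' j' \<noteq> {}"
  shows "ms \<in> exceptional_lists N d L"
proof -
  have len: "length ms = d" using assms(1) by (simp add: bounded_lists_def)
  have "distinct [i, j, i', j']"
  proof (rule ccontr)
    assume "\<not> distinct [i, j, i', j']"
    then consider "i = i'" | "i = j'" | "j = i'" | "j = j'" using assms(3,5) by auto
    then show False
    proof cases
      case 1
      then have "j = j'" using Cij_shared_endpoint[of ms j j' i] assms len by auto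
      then show False using 1 assms(7) by simp
    next
      case 2
      then have "j = i'" using Cij_shared_endpoint[of ms j i' i] Cij_commute[of ms i' j'] assms len by auto
      then show False using 2 assms(7) by auto
    next
      case 3
      then have "i = j'" using Cij_shared_endpoint[of ms i j' j] Cij_commute[of ms i j] assms len by auto
      then show False using 3 assms(7) by auto
    next
      case 4
      then have "i = i'"
        using Cij_shared_endpoint[of ms i i' j] Cij_commute[of ms i j] Cij_commute[of ms i' j'] assms len by auto
      then show False using 4 assms(7) by simp
    qed
  qed
  then have "(i, j, i', j') \<in> distinct_quadruples d" "ms \<in> circle_pair_lists N d i j i' j'"
    using assms by (auto simp: distinct_quadruples_def circle_pair_lists_def)
  then show ?thesis by (auto simp: exceptional_lists_def)
qed

lemma not_L_generic_imp_exceptional: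
  assumes "ms \<in> bounded_lists N d" "sorted_wrt (<) ms" "\<not> L_generic L ms"
  shows "ms \<in> exceptional_lists N d L"
proof -
  have len: "length ms = d" using assms(1) by (simp add: bounded_lists_def)
  have "distinct ms" using assms(2) by (simp add: strict_sorted_iff)
  show ?thesis
    using assms(3) unfolding L_generic_def generic_def len
    using relation_imp_exceptional[OF assms(1)] S_meets_C_imp_exceptional[OF assms(1)]
      circles_meet_imp_exceptional[OF assms(1) \<open>distinct ms\<close>] by blast
qed

section \<open>Density of the generic tuples\<close>

lemma card_strict_sorted_lists:
  fixes A :: "'a::linorder set"
  assumes "finite A"
  shows "card {xs. length xs = k \<and> sorted_wrt (<) xs \<and> set xs \<subseteq> A} = card A choose k"
proof -
  let ?L = "{xs. length xs = k \<and> sorted_wrt (<) xs \<and> set xs \<subseteq> A}"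
  have "inj_on set ?L" by (auto intro!: inj_onI strict_sorted_equal)
  moreover have "set ` ?L = {S. S \<subseteq> A \<and> card S = k}"
  proof (intro equalityI subsetI)
    fix S assume "S \<in> set ` ?L"
    then show "S \<in> {S. S \<subseteq> A \<and> card S = k}" by (auto simp: strict_sorted_iff distinct_card)
  next
    fix S assume S: "S \<in> {S. S \<subseteq> A \<and> card S = k}"
    then have "finite S" using assms finite_subset by auto
    then show "S \<in> set ` ?L" using S by (intro image_eqI[of _ _ "sorted_list_of_set S"]) auto
  qed
  ultimately have "card ?L = card {S. S \<subseteq> A \<and> card S = k}" using card_image by fastforce
  then show ?thesis using n_subsets[OF assms, of k] by simp
qed

lemma Bset_eq:
  assumes "0 \<le> R"
  shows "Bset d R = {ms. length ms = d \<and> sorted_wrt (<) ms \<and> set ms \<subseteq> {-int (nat \<lfloor>R\<rfloor>)..int (nat \<lfloor>R\<rfloor>)}}"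
proof -
  have "real_of_int \<bar>x\<bar> \<le> R \<longleftrightarrow> x \<in> {-int (nat \<lfloor>R\<rfloor>)..int (nat \<lfloor>R\<rfloor>)}" for x
    using assms by (simp add: le_floor_iff[symmetric] abs_le_iff) linarith
  then show ?thesis unfolding Bset_def by blast
qed

lemma card_Bset: "0 \<le> R \<Longrightarrow> card (Bset d R) = (2 * nat \<lfloor>R\<rfloor> + 1) choose d"
  by (simp only: Bset_eq card_strict_sorted_lists[OF finite_atLeastAtMost_int] card_symmetric_interval)

lemma le_double_nat_floor_add_one: "0 \<le> R \<Longrightarrow> R \<le> real (2 * nat \<lfloor>R\<rfloor> + 1)"
  by linarith

lemma card_Bset_ge:
  assumes "1 \<le> d" "real d \<le> R"
  shows "(real (2 * nat \<lfloor>R\<rfloor> + 1) / real d) ^ d \<le> real (card (Bset d R))"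
proof -
  have "d \<le> 2 * nat \<lfloor>R\<rfloor> + 1" using le_double_nat_floor_add_one[of R] assms by simp
  then show ?thesis using assms by (simp only: card_Bset binomial_ge_n_over_k_pow_k)
qed

lemma Bset_subset_bounded_lists: "0 \<le> R \<Longrightarrow> Bset d R \<subseteq> bounded_lists (nat \<lfloor>R\<rfloor>) d"
  by (auto simp: Bset_eq bounded_lists_def)

lemma finite_Bset: "0 \<le> R \<Longrightarrow> finite (Bset d R)"
  using finite_subset[OF Bset_subset_bounded_lists finite_bounded_lists] .

lemma card_Bset_diff_Gset_le:
  assumes "0 \<le> R"
  shows "real (card (Bset d R - Gset d L R))
    \<le> real ((2 * L + 1) ^ d + 6 * d ^ 3 + 6 * d ^ 4) * real (2 * nat \<lfloor>R\<rfloor> + 1) ^ (d - 1)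
       * sqrt (real (2 * nat \<lfloor>R\<rfloor> + 1))"
proof -
  have "Bset d R - Gset d L R \<subseteq> exceptional_lists (nat \<lfloor>R\<rfloor>) d L"
  proof
    fix ms assume "ms \<in> Bset d R - Gset d L R"
    then have "ms \<in> Bset d R" "sorted_wrt (<) ms" "\<not> L_generic L ms" by (auto simp: Gset_def Bset_def)
    then show "ms \<in> exceptional_lists (nat \<lfloor>R\<rfloor>) d L"
      using not_L_generic_imp_exceptional Bset_subset_bounded_lists[OF assms] by blast
  qed
  moreover have "finite (exceptional_lists (nat \<lfloor>R\<rfloor>) d L)"
    by (rule finite_subset[OF _ finite_bounded_lists])
      (auto simp: exceptional_lists_def relation_lists_def circle_lists_def circle_pair_lists_def)
  ultimately show ?thesis
    using card_exceptional_lists[of "nat \<lfloor>R\<rfloor>" d L] card_mono by (meson of_nat_le_iff order_trans)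
qed

lemma Gset_density_ge:
  fixes L :: nat
  assumes "1 \<le> d" "real d \<le> R"
  defines "C \<equiv> real ((2 * L + 1) ^ d + 6 * d ^ 3 + 6 * d ^ 4) * real d ^ d"
  shows "1 - C / sqrt R \<le> real (card (Gset d L R)) / real (card (Bset d R))"
proof -
  define K where "K = real ((2 * L + 1) ^ d + 6 * d ^ 3 + 6 * d ^ 4)"
  define P where "P = real (2 * nat \<lfloor>R\<rfloor> + 1)"
  define B where "B = real (card (Bset d R))"
  define E where "E = real (card (Bset d R - Gset d L R))"
  have "0 < R" "R \<le> P" using assms(1,2) le_double_nat_floor_add_one[of R] by (simp_all add: P_def)
  have "0 < (P / d) ^ d" using \<open>0 < R\<close> \<open>R \<le> P\<close> assms(1) by simp
  have B_ge: "(P / d) ^ d \<le> B" unfolding P_def B_def using card_Bset_ge[OF assms(1,2)] .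
  have E_le: "E \<le> K * P ^ (d - 1) * sqrt P"
    unfolding E_def K_def P_def using card_Bset_diff_Gset_le \<open>0 < R\<close> by simp
  have "finite (Bset d R)" using finite_Bset \<open>0 < R\<close> by simp
  moreover have "Gset d L R \<subseteq> Bset d R" by (auto simp: Gset_def)
  ultimately have "real (card (Gset d L R)) = B - E"
    unfolding B_def E_def by (simp add: card_Diff_subset card_mono finite_subset of_nat_diff)
  then have "real (card (Gset d L R)) / B = 1 - E / B"
    using B_ge \<open>0 < (P / d) ^ d\<close> by (simp add: diff_divide_distrib)
  moreover have "E / B \<le> K * P ^ (d - 1) * sqrt P / (P / d) ^ d"
    using E_le B_ge \<open>0 < (P / d) ^ d\<close> by (intro frac_le) (simp_all add: E_def K_def)
  moreover have "K * P ^ (d - 1) * sqrt P / (P / d) ^ d = C / sqrt P"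
  proof -
    have "0 < P" "0 < P ^ (d - 1)" "0 < real d ^ d" using \<open>0 < R\<close> \<open>R \<le> P\<close> assms(1) by simp_all
    moreover have "P ^ d = P ^ (d - 1) * P" using assms(1) by (cases d) simp_all
    ultimately have "K * P ^ (d - 1) * sqrt P / (P / d) ^ d = K * real d ^ d * (sqrt P / P)"
      by (simp add: power_divide)
    also have "\<dots> = C / sqrt P"
      using \<open>0 < P\<close> by (subst sqrt_divide_self_eq) (simp_all add: C_def K_def divide_inverse)
    finally show ?thesis .
  qed
  moreover have "C / sqrt P \<le> C / sqrt R"
    using \<open>0 < R\<close> \<open>R \<le> P\<close> by (intro divide_left_mono) (simp_all add: C_def)
  ultimately show ?thesis by (simp add: B_def)
qed

lemma tendsto_Gset_density:
  assumes "1 \<le> d"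
  shows "((\<lambda>R. real (card (Gset d L R)) / real (card (Bset d R))) \<longlongrightarrow> 1) at_top"
proof (rule tendsto_sandwich)
  define C where "C = real ((2 * L + 1) ^ d + 6 * d ^ 3 + 6 * d ^ 4) * real d ^ d"
  show "\<forall>\<^sub>F R in at_top. 1 - C / sqrt R \<le> real (card (Gset d L R)) / real (card (Bset d R))"
    using eventually_ge_at_top[of "real d"]
    by eventually_elim (use Gset_density_ge[OF assms] in \<open>simp add: C_def\<close>)
  show "\<forall>\<^sub>F R in at_top. real (card (Gset d L R)) / real (card (Bset d R)) \<le> 1"
  proof (rule eventually_mono[OF eventually_ge_at_top[of 0]])
    fix R :: real assume "0 \<le> R"
    then have "finite (Bset d R)" by (rule finite_Bset)
    then have "card (Gset d L R) \<le> card (Bset d R)" by (rule card_mono) (auto simp: Gset_def)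
    then show "real (card (Gset d L R)) / real (card (Bset d R)) \<le> 1" by (auto simp: divide_le_eq_1)
  qed
  have "((\<lambda>R. C / sqrt R) \<longlongrightarrow> 0) at_top"
    by (intro tendsto_divide_0[OF tendsto_const] filterlim_at_top_imp_at_infinity sqrt_at_top)
  then show "((\<lambda>R. 1 - C / sqrt R) \<longlongrightarrow> 1) at_top"
    using tendsto_diff[OF tendsto_const, of _ 0 at_top 1] by simp
qed simp

lemma card_Bset_at_top:
  assumes "1 \<le> d"
  shows "filterlim (\<lambda>R. real (card (Bset d R))) at_top at_top"
proof (rule filterlim_at_top_mono)
  show "filterlim (\<lambda>R. 1 / real d * R) at_top at_top"
    using assms by (intro filterlim_tendsto_pos_mult_at_top[OF tendsto_const] filterlim_ident) simp
  show "\<forall>\<^sub>F R in at_top. 1 / real d * R \<le> real (card (Bset d R))"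
  proof (rule eventually_mono[OF eventually_ge_at_top[of "real d"]])
    fix R assume "real d \<le> R"
    define P where "P = real (2 * nat \<lfloor>R\<rfloor> + 1)"
    have "R \<le> P" using le_double_nat_floor_add_one[of R] \<open>real d \<le> R\<close> by (simp add: P_def)
    then have "1 / real d * R \<le> (P / real d) ^ 1" using assms by (simp add: divide_right_mono)
    also have "\<dots> \<le> (P / real d) ^ d"
      using assms \<open>real d \<le> R\<close> \<open>R \<le> P\<close> by (intro power_increasing) simp_all
    also have "\<dots> \<le> real (card (Bset d R))" unfolding P_def by (rule card_Bset_ge[OF assms \<open>real d \<le> R\<close>])
    finally show "1 / real d * R \<le> real (card (Bset d R))" .
  qed
qed

lemma card_Gset_at_top:
  assumes "1 \<le> d"
  shows "filterlim (\<lambda>R. real (card (Gset d L R))) at_top at_top"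
proof -
  have lim: "filterlim (\<lambda>R. real (card (Gset d L R)) / real (card (Bset d R)) * real (card (Bset d R)))
      at_top at_top"
    by (rule filterlim_tendsto_pos_mult_at_top[OF tendsto_Gset_density[OF assms] _ card_Bset_at_top[OF assms]])
      simp
  have eq: "\<forall>\<^sub>F R in at_top. real (card (Gset d L R)) / real (card (Bset d R)) * real (card (Bset d R))
      = real (card (Gset d L R))"
    using card_Bset_at_top[OF assms] unfolding filterlim_at_top
    by (rule allE[of _ 1]) (auto elim: eventually_mono)
  show ?thesis using filterlim_cong[OF refl refl eq] lim by simp
qed

lemma infinite_if_card_subsets_at_top:
  assumes "F \<noteq> bot" "\<And>x. A x \<subseteq> S" "filterlim (\<lambda>x. real (card (A x))) at_top F"
  shows "infinite S"
proof
  assume "finite S"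
  then have le: "real (card (A x)) \<le> real (card S)" for x using assms(2) card_mono[of S "A x"] by simp
  have "\<forall>\<^sub>F x in F. real (card S) + 1 \<le> real (card (A x))"
    using assms(3) by (simp add: filterlim_at_top)
  then have "\<forall>\<^sub>F x in F. False"
  proof eventually_elim
    case (elim x)
    then show False using le[of x] by linarith
  qed
  then show False using assms(1) by (simp add: eventually_False)
qed

theorem lemma2p5:
  fixes d L :: nat
  assumes "d \<ge> 1"
  shows "infinite {ms :: int list. length ms = d \<and> sorted_wrt (<) ms \<and> L_generic L ms}
    \<and> ((\<lambda>R. real (card (Gset d L R)) / real (card (Bset d R))) \<longlongrightarrow> 1) at_top"
proof
  show "infinite {ms :: int list. length ms = d \<and> sorted_wrt (<) ms \<and> L_generic L ms}"
    by (rule infinite_if_card_subsets_at_top[OF _ _ card_Gset_at_top[OF assms]])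
      (auto simp: Gset_def Bset_def)
  show "((\<lambda>R. real (card (Gset d L R)) / real (card (Bset d R))) \<longlongrightarrow> 1) at_top"
    by (rule tendsto_Gset_density[OF assms])
qed

end
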